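(* In Model A below with $d$ odd, let $I:=-\inf_{t\in\mathbb{R}}\log\big(\varrho(1-\varrho)e^{t}+\tfrac12+\tfrac12(1-2\varrho+2\varrho^2)e^{-t}\big)$ and $\tilde I:=-\inf_{t\in\mathbb{R}}\log\big((\varrho(1-\varrho)+\tfrac14)e^{t}+(\tfrac12(1-2\varrho+2\varrho^2)+\tfrac14)e^{-t}\big)$. Then $$\lim_{d\to\infty,\ d\text{ odd}}\frac1d\log\mathbb{P}\big(\chi(w)=2\text{ under the $c$-segmentation rule with }c=d\big)=-\tilde I,$$ and $I\ge\tilde I$.
   Context: Segmentation rule. Let $d,c$ be positive integers with $c\mid d$. For $x\in\mathbb{R}^d$ and $1\le j\le c$ let $x_j\in\mathbb{R}^{d/c}$ denote its $j$-th block $(x_{(j-1)d/c+1},\dots,x_{jd/c})$, so that $x=x_1\circ\cdots\circ x_c$ (concatenation). Given dictionary words $w^1,\dots,w^K\in\mathbb{R}^d$ ($w^k$ representing class $k$) and a test word $w\in\mathbb{R}^d$, for each $j$ let $U_j\in\{1,\dots,K\}$ be an index $k$ minimizing the Euclidean distance $\|w_j-w^k_j\|$ in $\mathbb{R}^{d/c}$, chosen uniformly at random among all minimizers (independently of everything else). The $c$-segmentation rule assigns to $w$ the class $\chi(w)\in\operatorname{argmax}_k\#\{j:U_j=k\}$, chosen uniformly at random among all maximizers. The case $c=1$ is the Euclidean (nearest-neighbour) rule and $c=d$ is coordinate-by-coordinate comparison. Probabilities are over all random objects including tie-breaks. Model A. Fix $\varrho\in(0,\tfrac12)$. Let $m_1,m_2$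 be independent and uniformly distributed on $\{-1,+1\}^d$. Let $Y^{(0)},Y^{(1)},Y^{(2)}$ be independent random vectors in $\{-1,+1\}^d$, independent of $m_1,m_2$, each with i.i.d. coordinates satisfying $\mathbb{P}(Y_i=1)=1-\varrho$, $\mathbb{P}(Y_i=-1)=\varrho$. Write $x\times y$ for the coordinatewise product. There are $K=2$ classes; the dictionary words are $w^1=Y^{(1)}\times m_1$ (class 1) and $w^2=Y^{(2)}\times m_2$ (class 2), and the test word is $w=Y^{(0)}\times m_1$ (true class 1). *)

theory Defs
  imports "HOL-Probability.Probability"
begin

(* Vectors in R^d are functions nat => real, coordinates 0..d-1 (0-based). *)

definition block :: "nat \<Rightarrow> nat \<Rightarrow> (nat \<Rightarrow> real) \<Rightarrow> nat \<Rightarrow> (nat \<Rightarrow> real)" where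
  "block d c x j = (\<lambda>i. if i < d div c then x (j * (d div c) + i) else 0)"

definition block_dist :: "nat \<Rightarrow> nat \<Rightarrow> (nat \<Rightarrow> real) \<Rightarrow> (nat \<Rightarrow> real) \<Rightarrow> nat \<Rightarrow> real" where
  "block_dist d c x y j = sqrt (\<Sum>i<d div c. (block d c x j i - block d c y j i)\<^sup>2)"

definition block_argmin :: "nat \<Rightarrow> nat \<Rightarrow> nat \<Rightarrow> (nat \<Rightarrow> nat \<Rightarrow> real) \<Rightarrow> (nat \<Rightarrow> real) \<Rightarrow> nat \<Rightarrow> nat set" where
  "block_argmin d c K ws w j =
     {k \<in> {1..K}. \<forall>k' \<in> {1..K}. block_dist d c w (ws k) j \<le> block_dist d c w (ws k') j}"

definition vote_argmax :: "nat \<Rightarrow> nat \<Rightarrow> (nat \<Rightarrow> nat) \<Rightarrow> nat set" where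
  "vote_argmax c K U =
     {k \<in> {1..K}. \<forall>k' \<in> {1..K}. card {j \<in> {..<c}. U j = k'} \<le> card {j \<in> {..<c}. U j = k}}"

(* c-segmentation rule: distribution of the assigned class chi(w), given
   dictionary words ws 1 .. ws K and test word w; U_j independent uniform
   tie-breaks, final uniform tie-break among maximisers. *)
definition seg_rule :: "nat \<Rightarrow> nat \<Rightarrow> nat \<Rightarrow> (nat \<Rightarrow> nat \<Rightarrow> real) \<Rightarrow> (nat \<Rightarrow> real) \<Rightarrow> nat pmf" where
  "seg_rule d c K ws w =
     do {
       U \<leftarrow> Pi_pmf {..<c} 0 (\<lambda>j. pmf_of_set (block_argmin d c K ws w j));
       pmf_of_set (vote_argmax c K U)
     }"

definition unif_sign :: "nat \<Rightarrow> (nat \<Rightarrow> real) pmf" where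
  "unif_sign d = Pi_pmf {..<d} 0 (\<lambda>_. pmf_of_set {-1, 1})"

definition noise :: "real \<Rightarrow> nat \<Rightarrow> (nat \<Rightarrow> real) pmf" where
  "noise \<rho> d = Pi_pmf {..<d} 0 (\<lambda>_. map_pmf (\<lambda>b. if b then 1 else -1) (bernoulli_pmf (1 - \<rho>)))"

definition coord_mult :: "(nat \<Rightarrow> real) \<Rightarrow> (nat \<Rightarrow> real) \<Rightarrow> (nat \<Rightarrow> real)" where
  "coord_mult x y = (\<lambda>i. x i * y i)"

definition modelA_class :: "real \<Rightarrow> nat \<Rightarrow> nat \<Rightarrow> nat pmf" where
  "modelA_class \<rho> d c =
     do {
       m1 \<leftarrow> unif_sign d;
       m2 \<leftarrow> unif_sign d;
       Y0 \<leftarrow> noise \<rho> d;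
       Y1 \<leftarrow> noise \<rho> d;
       Y2 \<leftarrow> noise \<rho> d;
       seg_rule d c 2 (\<lambda>k. if k = 1 then coord_mult Y1 m1 else coord_mult Y2 m2) (coord_mult Y0 m1)
     }"

end

theory Submission
  imports Defs "HOL-Real_Asymp.Real_Asymp"
begin

(*
  With c = d every block is a single coordinate, so the votes U_j are i.i.d.: coordinate j votes
  for class 2 with probability p = rho (1 - rho) + 1/4, namely rho (1 - rho) for w^2_j being
  strictly nearer to w_j plus half of the tie probability 1/2.  For odd d the class is therefore
  decided by a strict majority, P(chi(w) = 2) = P(Bin(d, p) > d/2).  Since p <= 1/2, every term of
  this binomial tail is at most the central one, and the central binomial coefficient is at least
  2^d / (d + 1); hence the tail equals (2 sqrt (p (1 - p)))^d up to a factor polynomial in d.  By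
  AM-GM, ln (2 sqrt (p (1 - p))) = inf_t ln (p e^t + (1 - p) e^-t) = - tilde I, and I >= tilde I
  because 1/2 <= (e^t + e^-t) / 4.
*)

lemma prob_binomial_majority:
  fixes p :: real
  assumes "0 < p" "p < 1"
  shows "measure_pmf.prob (binomial_pmf (2*n+1) p) {k. 2*n+1 < 2*k}
       = (\<Sum>k=Suc n..2*n+1. real ((2*n+1) choose k) * p^k * (1-p)^(2*n+1-k))"
proof -
  have "measure_pmf.prob (binomial_pmf (2*n+1) p) {k. 2*n+1 < 2*k}
      = measure_pmf.prob (binomial_pmf (2*n+1) p) ({k. 2*n+1 < 2*k} \<inter> set_pmf (binomial_pmf (2*n+1) p))"
    by (simp add: measure_Int_set_pmf)
  also have "{k. 2*n+1 < 2*k} \<inter> set_pmf (binomial_pmf (2*n+1) p) = {Suc n..2*n+1}"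
    using assms by auto
  also have "measure_pmf.prob (binomial_pmf (2*n+1) p) {Suc n..2*n+1}
      = (\<Sum>k=Suc n..2*n+1. pmf (binomial_pmf (2*n+1) p) k)"
    by (rule measure_measure_pmf_finite) simp
  also have "\<dots> = (\<Sum>k=Suc n..2*n+1. real ((2*n+1) choose k) * p^k * (1-p)^(2*n+1-k))"
    using assms by (intro sum.cong refl pmf_binomial) auto
  finally show ?thesis .
qed

lemma binomial_term_le_central:
  fixes p :: real
  assumes "0 \<le> p" "p \<le> 1/2" "n < k" "k \<le> 2*n+1"
  shows "p^k * (1-p)^(2*n+1-k) \<le> p^(n+1) * (1-p)^n"
proof -
  define i where "i = k - (n + 1)"
  have k: "k = n + 1 + i" and i: "i \<le> n"
    using assms(3,4) by (simp_all add: i_def)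
  have "p^k * (1-p)^(2*n+1-k) = p^(n+1) * (p^i * (1-p)^(n-i))"
    using i k by (simp add: power_add)
  also have "\<dots> \<le> p^(n+1) * ((1-p)^i * (1-p)^(n-i))"
    using assms by (intro mult_left_mono mult_right_mono power_mono) auto
  also have "(1-p)^i * (1-p)^(n-i) = (1-p)^n"
    using i by (simp flip: power_add)
  finally show ?thesis .
qed

lemma two_pow_le_central_binomial_odd:
  "2^(2*n+1) \<le> (2*n+2) * ((2*n+1) choose (n+1))"
proof -
  have "2^(2*n+1) = (\<Sum>k\<le>2*n+1. (2*n+1) choose k)"
    by (rule choose_row_sum[symmetric])
  also have "\<dots> \<le> (\<Sum>k\<le>2*n+1. (2*n+1) choose n)"
    by (intro sum_mono) (use binomial_maximum[of "2*n+1"] in simp)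
  also have "\<dots> = (2*n+2) * ((2*n+1) choose (n+1))"
    using central_binomial_odd[of "2*n+1"] by simp
  finally show ?thesis .
qed

lemma prob_binomial_majority_bounds:
  fixes p :: real and n :: nat
  assumes "0 < p" "p \<le> 1/2"
  defines "P \<equiv> measure_pmf.prob (binomial_pmf (2*n+1) p) {k. 2*n+1 < 2*k}"
    and "M \<equiv> 2^(2*n+1) * (p^(n+1) * (1-p)^n)"
  shows "P \<le> M" and "M / real (2*n+2) \<le> P"
proof -
  have P: "P = (\<Sum>k=Suc n..2*n+1. real ((2*n+1) choose k) * p^k * (1-p)^(2*n+1-k))"
    unfolding P_def using assms by (intro prob_binomial_majority) auto
  have "P \<le> (\<Sum>k=Suc n..2*n+1. real ((2*n+1) choose k) * (p^(n+1) * (1-p)^n))"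
    unfolding P mult.assoc
    by (intro sum_mono mult_left_mono binomial_term_le_central) (use assms in auto)
  also have "\<dots> \<le> (\<Sum>k\<le>2*n+1. real ((2*n+1) choose k) * (p^(n+1) * (1-p)^n))"
    by (intro sum_mono2) (use assms in auto)
  also have "\<dots> = (\<Sum>k\<le>2*n+1. real ((2*n+1) choose k)) * (p^(n+1) * (1-p)^n)"
    by (rule sum_distrib_right[symmetric])
  also have "\<dots> = M"
    unfolding M_def of_nat_sum[symmetric] choose_row_sum by simp
  finally show "P \<le> M" .
  have "(2::real)^(2*n+1) \<le> real (2*n+2) * real ((2*n+1) choose (n+1))"
    using two_pow_le_central_binomial_odd[of n] by (metis of_nat_le_iff of_nat_mult of_nat_numeral of_nat_power)
  then have central: "2^(2*n+1) / real (2*n+2) \<le> real ((2*n+1) choose (n+1))"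
    by (subst pos_divide_le_eq) (simp_all add: mult.commute)
  have "M / real (2*n+2) = 2^(2*n+1) / real (2*n+2) * (p^(n+1) * (1-p)^n)"
    unfolding M_def by simp
  also have "\<dots> \<le> real ((2*n+1) choose (n+1)) * (p^(n+1) * (1-p)^n)"
    by (intro mult_right_mono central) (use assms in simp)
  also have "\<dots> = real ((2*n+1) choose Suc n) * p ^ Suc n * (1 - p) ^ (2*n+1 - Suc n)"
    by simp
  also have "\<dots> \<le> P"
    unfolding P
    by (rule member_le_sum[where f = "\<lambda>k. real ((2*n+1) choose k) * p^k * (1-p)^(2*n+1-k)"])
       (use assms in auto)
  finally show "M / real (2*n+2) \<le> P" .
qed

lemma ln_prob_binomial_majority_bounds:
  fixes p :: real and n :: nat
  assumes "0 < p" "p \<le> 1/2"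
  defines "P \<equiv> measure_pmf.prob (binomial_pmf (2*n+1) p) {k. 2*n+1 < 2*k}"
    and "r \<equiv> ln (2 * sqrt (p * (1 - p)))"
    and "e \<equiv> (ln p - ln (1 - p)) / 2"
  shows "ln P / real (2*n+1) \<le> r + e / real (2*n+1)"
    and "r + (e - ln (real (2*n+2))) / real (2*n+1) \<le> ln P / real (2*n+1)"
proof -
  define M where "M = 2^(2*n+1) * (p^(n+1) * (1-p)^n)"
  have M_pos: "0 < M"
    using assms by (simp add: M_def)
  have P_le: "P \<le> M" and le_P: "M / real (2*n+2) \<le> P"
    using prob_binomial_majority_bounds[OF assms(1,2), of n] unfolding P_def M_def by auto
  have P_pos: "0 < P"
    by (rule less_le_trans[OF divide_pos_pos[OF M_pos] le_P]) simp
  have r: "r = ln 2 + (ln p + ln (1 - p)) / 2"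
    using assms by (simp add: r_def ln_mult ln_sqrt)
  have "ln M = real (2*n+1) * ln 2 + real (n+1) * ln p + real n * ln (1 - p)"
    using assms by (simp add: M_def ln_mult ln_realpow algebra_simps)
  then have ln_M: "ln M = real (2*n+1) * r + e"
    unfolding r e_def by (simp add: field_simps)
  have "ln P \<le> real (2*n+1) * r + e"
    unfolding ln_M[symmetric] by (rule ln_mono[OF P_le P_pos])
  then have "ln P / real (2*n+1) \<le> (real (2*n+1) * r + e) / real (2*n+1)"
    by (rule divide_right_mono) simp
  then show "ln P / real (2*n+1) \<le> r + e / real (2*n+1)"
    by (simp add: add_divide_distrib)
  have "ln (M / real (2*n+2)) \<le> ln P"
    using M_pos le_P by (intro ln_mono) auto
  then have "real (2*n+1) * r + (e - ln (real (2*n+2))) \<le> ln P"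
    using M_pos by (simp add: ln_div ln_M)
  then have "(real (2*n+1) * r + (e - ln (real (2*n+2)))) / real (2*n+1) \<le> ln P / real (2*n+1)"
    by (rule divide_right_mono) simp
  then show "r + (e - ln (real (2*n+2))) / real (2*n+1) \<le> ln P / real (2*n+1)"
    by (simp add: add_divide_distrib)
qed

lemma ln_prob_binomial_majority_rate:
  fixes p :: real
  assumes "0 < p" "p \<le> 1/2"
  shows "(\<lambda>n. ln (measure_pmf.prob (binomial_pmf (2*n+1) p) {k. 2*n+1 < 2*k}) / real (2*n+1))
           \<longlonglongrightarrow> ln (2 * sqrt (p * (1 - p)))"
proof -
  define r where "r = ln (2 * sqrt (p * (1 - p)))"
  define e where "e = (ln p - ln (1 - p)) / 2"
  have "(\<lambda>n. r + (e - ln (real (2*n+2))) / real (2*n+1)) \<longlonglongrightarrow> r"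
    by real_asymp
  moreover have "(\<lambda>n. r + e / real (2*n+1)) \<longlonglongrightarrow> r"
    by real_asymp
  ultimately show ?thesis
    unfolding r_def[symmetric]
    by (rule tendsto_sandwich[rotated 2])
       (use ln_prob_binomial_majority_bounds[OF assms] in \<open>auto simp: r_def e_def\<close>)
qed

lemma two_sqrt_le_exp_plus_exp_neg:
  fixes a b t :: real
  assumes "0 \<le> a" "0 \<le> b"
  shows "2 * sqrt (a * b) \<le> a * exp t + b * exp (- t)"
proof -
  have "sqrt (a * exp t * (b * exp (- t))) \<le> (a * exp t + b * exp (- t)) / 2"
    using assms by (intro arith_geo_mean_sqrt) auto
  moreover have "a * exp t * (b * exp (- t)) = a * b"
    by (simp add: exp_minus field_simps)
  ultimately show ?thesis
    by simp
qed

lemma exp_plus_exp_neg_attains_two_sqrt: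
  fixes a b :: real
  assumes "0 < a" "0 < b"
  obtains t where "a * exp t + b * exp (- t) = 2 * sqrt (a * b)"
proof -
  define s r where "s = sqrt a" and "r = sqrt b"
  have pos: "0 < s" "0 < r" and sq: "a = s\<^sup>2" "b = r\<^sup>2"
    using assms by (simp_all add: s_def r_def)
  have "a * exp (ln (r / s)) + b * exp (- ln (r / s)) = 2 * (s * r)"
    using pos unfolding sq by (simp add: exp_minus power2_eq_square field_simps)
  moreover have "sqrt (a * b) = s * r"
    using assms by (simp add: s_def r_def real_sqrt_mult)
  ultimately show ?thesis
    using that by metis
qed

lemma INF_ln_exp_plus_exp_neg:
  fixes a b :: real
  assumes "0 < a" "0 < b"
  shows "(INF t. ln (a * exp t + b * exp (- t))) = ln (2 * sqrt (a * b))"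
proof (rule antisym)
  have lower: "ln (2 * sqrt (a * b)) \<le> ln (a * exp t + b * exp (- t))" for t
    using assms by (intro ln_mono two_sqrt_le_exp_plus_exp_neg) auto
  obtain t0 where "a * exp t0 + b * exp (- t0) = 2 * sqrt (a * b)"
    using exp_plus_exp_neg_attains_two_sqrt assms by blast
  moreover have "(INF t. ln (a * exp t + b * exp (- t))) \<le> ln (a * exp t0 + b * exp (- t0))"
    using lower by (intro cINF_lower bdd_belowI2) auto
  ultimately show "(INF t. ln (a * exp t + b * exp (- t))) \<le> ln (2 * sqrt (a * b))"
    by simp
  show "ln (2 * sqrt (a * b)) \<le> (INF t. ln (a * exp t + b * exp (- t)))"
    using lower by (intro cINF_greatest) auto
qed

lemma INF_ln_exp_plus_exp_neg_mono:
  fixes a b c :: real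
  assumes "0 < a" "0 < b" "0 \<le> c"
  shows "(INF t. ln (a * exp t + 2 * c + b * exp (- t)))
       \<le> (INF t. ln ((a + c) * exp t + (b + c) * exp (- t)))"
proof (rule cINF_mono)
  have "ln (2 * sqrt (a * b)) \<le> ln (a * exp t + 2 * c + b * exp (- t))" for t
    using assms two_sqrt_le_exp_plus_exp_neg[of a b t] by (intro ln_mono) auto
  then show "bdd_below (range (\<lambda>t. ln (a * exp t + 2 * c + b * exp (- t))))"
    by (rule bdd_belowI2)
  fix t :: real
  have "2 * c \<le> c * exp t + c * exp (- t)"
    using assms two_sqrt_le_exp_plus_exp_neg[of c c t] by simp
  then have "ln (a * exp t + 2 * c + b * exp (- t)) \<le> ln ((a + c) * exp t + (b + c) * exp (- t))"
    using assms by (intro ln_mono) (auto simp: algebra_simps intro: add_pos_nonneg)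
  then show "\<exists>s\<in>UNIV. ln (a * exp s + 2 * c + b * exp (- s)) \<le> ln ((a + c) * exp t + (b + c) * exp (- t))"
    by blast
qed simp

definition nearer_classes :: "real \<Rightarrow> real \<Rightarrow> real \<Rightarrow> nat set" where
  "nearer_classes x u v =
     (if \<bar>x - u\<bar> < \<bar>x - v\<bar> then {1} else if \<bar>x - v\<bar> < \<bar>x - u\<bar> then {2} else {1, 2})"

lemma block_argmin_single_coordinates:
  assumes "j < d"
  shows "block_argmin d d 2 ws w j = nearer_classes (w j) (ws 1 j) (ws 2 j)"
proof -
  have "block_dist d d x y j = \<bar>x j - y j\<bar>" for x y
    using assms by (simp add: block_dist_def block_def)
  moreover have "{1..2::nat} = {1, 2}" by auto
  ultimately show ?thesis
    unfolding block_argmin_def nearer_classes_def by auto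
qed

definition sign_noise :: "real \<Rightarrow> real pmf" where
  "sign_noise \<rho> = map_pmf (\<lambda>b. if b then 1 else -1) (bernoulli_pmf (1 - \<rho>))"

definition coordinate_vote :: "real \<Rightarrow> nat pmf" where
  "coordinate_vote \<rho> =
     do {
       a \<leftarrow> pmf_of_set {-1, 1};
       b \<leftarrow> pmf_of_set {-1, 1};
       y0 \<leftarrow> sign_noise \<rho>;
       y1 \<leftarrow> sign_noise \<rho>;
       y2 \<leftarrow> sign_noise \<rho>;
       pmf_of_set (nearer_classes (y0 * a) (y1 * a) (y2 * b))
     }"

lemma mult_one_minus_le_quarter: "(x::real) * (1 - x) \<le> 1/4"
proof -
  have "0 \<le> (x - 1/2)\<^sup>2" by simp
  then show ?thesis by (simp add: power2_eq_square algebra_simps)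
qed

lemma coordinate_vote_eq_bernoulli:
  assumes "0 \<le> \<rho>" "\<rho> \<le> 1"
  shows "coordinate_vote \<rho> = map_pmf (\<lambda>b. if b then 2 else 1) (bernoulli_pmf (\<rho> * (1 - \<rho>) + 1/4))"
proof -
  define p where "p = \<rho> * (1 - \<rho>) + 1/4"
  have p: "0 \<le> p" "p \<le> 1"
    using assms mult_one_minus_le_quarter[of \<rho>] by (auto simp: p_def)
  have "pmf (coordinate_vote \<rho>) k = pmf (map_pmf (\<lambda>b. if b then 2 else 1) (bernoulli_pmf p)) k" for k
  proof -
    have "pmf (map_pmf (\<lambda>b. if b then 2 else 1) (bernoulli_pmf p)) k
        = p * of_bool (k = 2) + (1 - p) * of_bool (k = 1)"
      using p by (simp add: map_pmf_def pmf_bind indicator_def)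
    moreover have "pmf (coordinate_vote \<rho>) k = p * of_bool (k = 2) + (1 - p) * of_bool (k = 1)"
      using assms unfolding p_def
      by (simp add: coordinate_vote_def sign_noise_def nearer_classes_def pmf_bind integral_pmf_of_set
          pmf_of_set_singleton indicator_def) (auto simp: field_simps)
    ultimately show ?thesis
      by simp
  qed
  then show ?thesis
    unfolding p_def[symmetric] by (rule pmf_eqI)
qed

lemma vote_argmax_two_classes_odd:
  assumes "odd c" and "\<forall>j<c. U j \<in> {1, 2}"
  shows "vote_argmax c 2 U = {if c < 2 * card {j\<in>{..<c}. U j = 2} then 2 else 1}"
proof -
  let ?votes = "\<lambda>k. {j\<in>{..<c}. U j = k}"
  have "?votes 1 \<union> ?votes 2 = {..<c}"
    using assms(2) by auto
  moreover have "card (?votes 1 \<union> ?votes 2) = card (?votes 1) + card (?votes 2)"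
    by (rule card_Un_disjoint) auto
  ultimately have "card (?votes 1) + card (?votes 2) = c"
    by simp
  moreover have "c \<noteq> 2 * card (?votes 2)"
    using assms(1) by (metis dvd_triv_left)
  moreover have "{1..2::nat} = {1, 2}" by auto
  ultimately show ?thesis
    unfolding vote_argmax_def by auto
qed

lemma modelA_class_eq_coordinate_votes:
  "modelA_class \<rho> d d = Pi_pmf {..<d} 0 (\<lambda>_. coordinate_vote \<rho>) \<bind> (\<lambda>U. pmf_of_set (vote_argmax d 2 U))"
proof -
  define vote where "vote = (\<lambda>U. pmf_of_set (vote_argmax d 2 U))"
  have "seg_rule d d 2 (\<lambda>k. if k = 1 then coord_mult Y1 m1 else coord_mult Y2 m2) (coord_mult Y0 m1)
      = Pi_pmf {..<d} 0 (\<lambda>j. pmf_of_set (nearer_classes (Y0 j * m1 j) (Y1 j * m1 j) (Y2 j * m2 j)))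
        \<bind> vote" for m1 m2 Y0 Y1 Y2
    unfolding seg_rule_def vote_def
    by (intro bind_pmf_cong Pi_pmf_cong refl) (simp add: block_argmin_single_coordinates coord_mult_def)
  then have "modelA_class \<rho> d d =
      do {m1 \<leftarrow> unif_sign d; m2 \<leftarrow> unif_sign d; Y0 \<leftarrow> noise \<rho> d; Y1 \<leftarrow> noise \<rho> d; Y2 \<leftarrow> noise \<rho> d;
          Pi_pmf {..<d} 0 (\<lambda>j. pmf_of_set (nearer_classes (Y0 j * m1 j) (Y1 j * m1 j) (Y2 j * m2 j)))}
      \<bind> vote"
    by (simp add: modelA_class_def bind_assoc_pmf)
  also have "\<dots> = Pi_pmf {..<d} 0 (\<lambda>_. coordinate_vote \<rho>) \<bind> vote"
    unfolding unif_sign_def noise_def coordinate_vote_def sign_noise_def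
    by (simp only: Pi_pmf_bind[OF finite_lessThan, where d' = 0])
  finally show ?thesis
    by (simp add: vote_def)
qed

lemma Pi_pmf_coordinate_vote:
  fixes d :: nat
  assumes "0 \<le> \<rho>" "\<rho> \<le> 1"
  shows "Pi_pmf {..<d} 0 (\<lambda>_. coordinate_vote \<rho>)
    = map_pmf (\<lambda>f j. if j \<in> {..<d} then if f j then 2 else 1 else 0)
        (Pi_pmf {..<d} False (\<lambda>_. bernoulli_pmf (\<rho> * (1 - \<rho>) + 1/4)))"
proof -
  define coin where "coin = bernoulli_pmf (\<rho> * (1 - \<rho>) + 1/4)"
  have "Pi_pmf {..<d} 0 (\<lambda>_. coordinate_vote \<rho>)
      = Pi_pmf {..<d} 0 (\<lambda>_. map_pmf (\<lambda>b. if b then 2 else 1) coin)"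
    using assms by (simp add: coordinate_vote_eq_bernoulli coin_def)
  \<comment> \<open>No Boolean is mapped to the default value 0, so the default is first changed to 1.\<close>
  also have "\<dots> = map_pmf (\<lambda>f j. if j \<in> {..<d} then f j else 0)
      (Pi_pmf {..<d} 1 (\<lambda>_. map_pmf (\<lambda>b. if b then 2 else 1) coin))"
    by (rule Pi_pmf_default_swap[symmetric]) simp
  also have "Pi_pmf {..<d} 1 (\<lambda>_. map_pmf (\<lambda>b. if b then 2 else (1::nat)) coin)
      = map_pmf (\<lambda>g. (\<lambda>b. if b then 2 else 1) \<circ> g) (Pi_pmf {..<d} False (\<lambda>_. coin))"
    by (rule Pi_pmf_map) simp_all
  finally show ?thesis
    by (simp add: map_pmf_comp comp_def coin_def)
qed

lemma modelA_class_diagonal_eq_binomial: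
  assumes "0 \<le> \<rho>" "\<rho> \<le> 1" "odd d"
  shows "modelA_class \<rho> d d =
    map_pmf (\<lambda>k. if d < 2 * k then 2 else 1) (binomial_pmf d (\<rho> * (1 - \<rho>) + 1/4))"
proof -
  define p where "p = \<rho> * (1 - \<rho>) + 1/4"
  define bits where "bits = Pi_pmf {..<d} False (\<lambda>_. bernoulli_pmf p)"
  have p: "p \<in> {0..1}"
    using assms mult_one_minus_le_quarter[of \<rho>] by (auto simp: p_def)
  have majority: "pmf_of_set (vote_argmax d 2 (\<lambda>j. if j < d then if f j then 2 else 1 else 0))
      = return_pmf (if d < 2 * card {j\<in>{..<d}. f j} then 2 else 1)" for f
  proof -
    have "{j\<in>{..<d}. (if j < d then if f j then 2 else 1 else 0) = (2::nat)} = {j\<in>{..<d}. f j}"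
      by auto
    then show ?thesis
      using assms(3) by (subst vote_argmax_two_classes_odd) (simp_all add: pmf_of_set_singleton)
  qed
  have "modelA_class \<rho> d d = map_pmf (\<lambda>f. if d < 2 * card {j\<in>{..<d}. f j} then 2 else 1) bits"
    unfolding modelA_class_eq_coordinate_votes Pi_pmf_coordinate_vote[OF assms(1,2)] bind_map_pmf
    by (simp add: comp_def majority map_pmf_def bits_def p_def)
  also have "\<dots> = map_pmf (\<lambda>k. if d < 2 * k then 2 else 1) (map_pmf (\<lambda>f. card {j\<in>{..<d}. f j}) bits)"
    by (simp add: map_pmf_comp)
  also have "map_pmf (\<lambda>f. card {j\<in>{..<d}. f j}) bits = binomial_pmf d p"
    unfolding bits_def by (rule binomial_pmf_altdef'[symmetric]) (use p in simp_all)
  finally show ?thesis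
    by (simp add: p_def)
qed

lemma prob_modelA_class_diagonal:
  assumes "0 \<le> \<rho>" "\<rho> \<le> 1" "odd d"
  shows "measure_pmf.prob (modelA_class \<rho> d d) {2}
       = measure_pmf.prob (binomial_pmf d (\<rho> * (1 - \<rho>) + 1/4)) {k. d < 2 * k}"
  using assms by (simp add: modelA_class_diagonal_eq_binomial vimage_def)

theorem mainTheorem2:
  fixes \<rho> I It :: real
  assumes "0 < \<rho>" and "\<rho> < 1/2"
    and "I = - (INF t::real. ln (\<rho> * (1 - \<rho>) * exp t + 1/2
                 + 1/2 * (1 - 2 * \<rho> + 2 * \<rho>\<^sup>2) * exp (- t)))"
    and "It = - (INF t::real. ln ((\<rho> * (1 - \<rho>) + 1/4) * exp t
                 + (1/2 * (1 - 2 * \<rho> + 2 * \<rho>\<^sup>2) + 1/4) * exp (- t)))"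
  shows "((\<lambda>n. ln (measure_pmf.prob (modelA_class \<rho> (2 * n + 1) (2 * n + 1)) {2})
              / real (2 * n + 1)) \<longlonglongrightarrow> - It)
         \<and> I \<ge> It"
proof
  define p where "p = \<rho> * (1 - \<rho>) + 1/4"
  define b where "b = 1/2 * (1 - 2 * \<rho> + 2 * \<rho>\<^sup>2)"
  have "0 < \<rho> * (1 - \<rho>)"
    using assms(1,2) by simp
  then have p: "0 < p" "p \<le> 1/2"
    using mult_one_minus_le_quarter[of \<rho>] by (auto simp: p_def)
  have b: "b + 1/4 = 1 - p"
    by (simp add: b_def p_def power2_eq_square algebra_simps)
  have "It = - ln (2 * sqrt (p * (1 - p)))"
    unfolding assms(4) b_def[symmetric] b p_def[symmetric]
    using INF_ln_exp_plus_exp_neg[of p "1 - p"] p by simp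
  moreover have "(\<lambda>n. ln (measure_pmf.prob (modelA_class \<rho> (2 * n + 1) (2 * n + 1)) {2}) / real (2 * n + 1))
      = (\<lambda>n. ln (measure_pmf.prob (binomial_pmf (2*n+1) p) {k. 2*n+1 < 2*k}) / real (2*n+1))"
    using assms(1,2) by (simp add: prob_modelA_class_diagonal p_def)
  ultimately show "(\<lambda>n. ln (measure_pmf.prob (modelA_class \<rho> (2 * n + 1) (2 * n + 1)) {2})
      / real (2 * n + 1)) \<longlonglongrightarrow> - It"
    using ln_prob_binomial_majority_rate[OF p] by simp
  have "0 < b"
    using b p by linarith
  then have "(INF t. ln (\<rho> * (1 - \<rho>) * exp t + 2 * (1/4) + b * exp (- t)))
      \<le> (INF t. ln ((\<rho> * (1 - \<rho>) + 1/4) * exp t + (b + 1/4) * exp (- t)))"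
    using \<open>0 < \<rho> * (1 - \<rho>)\<close> by (intro INF_ln_exp_plus_exp_neg_mono) auto
  then show "I \<ge> It"
    unfolding assms(3,4) b_def[symmetric] by simp
qed

end
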